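(* Let $V$ be an integral, unimodular, symmetric, positive definite $m\times m$ matrix. Then for every $x\in\mathbb{Z}^m$, $$|x|\le \lVert V^{-1}\rVert_1\,(x^TVx).$$
   Context: $|x|$ denotes the Euclidean norm of $x$. For a real $m\times m$ matrix $A=(a_{ij})$, $\lVert A\rVert_1=\max_j\sum_{i=1}^m|a_{ij}|$ is the operator norm with respect to the $\ell^1$-norm. Unimodular means determinant $\pm1$. *)

theory Defs
  imports "HOL-Analysis.Analysis"
begin

text \<open>Operator norm with respect to the l1-norm: maximum absolute column sum.\<close>
definition norm1_op :: "real^'n^'m \<Rightarrow> real" where
  "norm1_op A = Max (range (\<lambda>j. \<Sum>i\<in>UNIV. \<bar>A $ i $ j\<bar>))"

definition integral_matrix :: "real^'n^'m \<Rightarrow> bool" where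
  "integral_matrix A \<longleftrightarrow> (\<forall>i j. A $ i $ j \<in> \<int>)"

definition integral_vector :: "real^'n \<Rightarrow> bool" where
  "integral_vector x \<longleftrightarrow> (\<forall>i. x $ i \<in> \<int>)"

end

theory Submission
  imports Defs
begin

text \<open>Let \<open>W = V\<^sup>-\<^sup>1\<close>. Cauchy-Schwarz for the positive definite form of \<open>V\<close>, applied to
  \<open>x\<close> and \<open>W x\<close>, gives \<open>(x\<^sup>Tx)\<^sup>2 \<le> (x\<^sup>TVx)(x\<^sup>TWx)\<close>; as \<open>W\<close> is symmetric, its quadratic
  form is at most \<open>\<parallel>W\<parallel>\<^sub>1 x\<^sup>Tx\<close>, so \<open>x\<^sup>Tx \<le> \<parallel>W\<parallel>\<^sub>1 x\<^sup>TVx\<close>. Finally \<open>|x| \<le> |x|\<^sup>2\<close> for a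
  nonzero integral vector, which has a coordinate of absolute value at least 1.\<close>

lemma column_sum_le_norm1_op: "(\<Sum>i\<in>UNIV. \<bar>A $ i $ j\<bar>) \<le> norm1_op A"
  unfolding norm1_op_def by (rule Max_ge) auto

lemma symmetric_matrix_entry:
  assumes "transpose A = A"
  shows "A $ i $ j = A $ j $ i"
  by (metis assms transpose_def vec_lambda_beta)

lemma quadratic_form_le_norm1_op:
  fixes A :: "real^'n^'n"
  assumes "transpose A = A"
  shows "x \<bullet> (A *v x) \<le> norm1_op A * (x \<bullet> x)"
proof -
  have "x \<bullet> (A *v x) = (\<Sum>i\<in>UNIV. \<Sum>j\<in>UNIV. A$i$j * (x$i * x$j))"
    by (simp add: inner_vec_def matrix_vector_mult_def sum_distrib_left ac_simps)
  also have "\<dots> \<le> (\<Sum>i\<in>UNIV. \<Sum>j\<in>UNIV. \<bar>A$i$j\<bar> * (x$i)\<^sup>2 / 2 + \<bar>A$i$j\<bar> * (x$j)\<^sup>2 / 2)"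
  proof (intro sum_mono)
    fix i j
    have "\<bar>x$i * x$j\<bar> \<le> ((x$i)\<^sup>2 + (x$j)\<^sup>2) / 2"
      using sum_squares_bound[of "\<bar>x$i\<bar>" "\<bar>x$j\<bar>"] by (simp add: abs_mult)
    then have "\<bar>A$i$j\<bar> * \<bar>x$i * x$j\<bar> \<le> \<bar>A$i$j\<bar> * (((x$i)\<^sup>2 + (x$j)\<^sup>2) / 2)"
      by (rule mult_left_mono) simp
    moreover have "A$i$j * (x$i * x$j) \<le> \<bar>A$i$j\<bar> * \<bar>x$i * x$j\<bar>"
      by (metis abs_ge_self abs_mult)
    ultimately show "A$i$j * (x$i * x$j) \<le> \<bar>A$i$j\<bar> * (x$i)\<^sup>2 / 2 + \<bar>A$i$j\<bar> * (x$j)\<^sup>2 / 2"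
      by (simp add: field_simps)
  qed
  also have "\<dots> = (\<Sum>j\<in>UNIV. (\<Sum>i\<in>UNIV. \<bar>A$i$j\<bar>) * (x$j)\<^sup>2)"
  proof -
    have "(\<Sum>i\<in>UNIV. \<Sum>j\<in>UNIV. \<bar>A$i$j\<bar> * (x$i)\<^sup>2) = (\<Sum>i\<in>UNIV. \<Sum>j\<in>UNIV. \<bar>A$i$j\<bar> * (x$j)\<^sup>2)"
      by (subst sum.swap) (intro sum.cong refl; metis symmetric_matrix_entry assms)
    moreover have "(\<Sum>j\<in>UNIV. (\<Sum>i\<in>UNIV. \<bar>A$i$j\<bar>) * (x$j)\<^sup>2) = (\<Sum>i\<in>UNIV. \<Sum>j\<in>UNIV. \<bar>A$i$j\<bar> * (x$j)\<^sup>2)"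
      unfolding sum_distrib_right by (rule sum.swap)
    ultimately show ?thesis
      by (simp add: sum.distrib flip: sum_divide_distrib)
  qed
  also have "\<dots> \<le> (\<Sum>j\<in>UNIV. norm1_op A * (x$j)\<^sup>2)"
    by (intro sum_mono mult_right_mono column_sum_le_norm1_op) simp
  also have "\<dots> = norm1_op A * (x \<bullet> x)"
    by (simp add: inner_vec_def sum_distrib_left power2_eq_square)
  finally show ?thesis .
qed

lemma matrix_inv_right:
  assumes "invertible A"
  shows "A ** matrix_inv A = mat 1"
  using someI_ex[OF assms[unfolded invertible_def]] unfolding matrix_inv_def by blast

lemma symmetric_matrix_inv:
  fixes A :: "'a::comm_ring_1^'n^'n"
  assumes "invertible A" and "transpose A = A"
  shows "transpose (matrix_inv A) = matrix_inv A"
proof -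
  let ?W = "matrix_inv A"
  have "transpose ?W ** A = transpose (A ** ?W)"
    using assms(2) by (simp add: matrix_transpose_mul)
  also have "\<dots> = mat 1"
    using matrix_inv_right[OF assms(1)] by simp
  finally have left_inverse: "transpose ?W ** A = mat 1" .
  have "transpose ?W = transpose ?W ** (A ** ?W)"
    using matrix_inv_right[OF assms(1)] by simp
  also have "\<dots> = ?W"
    by (simp add: matrix_mul_assoc left_inverse)
  finally show ?thesis .
qed

lemma symmetric_matrix_inner_commute:
  fixes A :: "real^'n^'n"
  assumes "transpose A = A"
  shows "a \<bullet> (A *v b) = b \<bullet> (A *v a)"
proof -
  have "a \<bullet> (A *v b) = (transpose A *v a) \<bullet> b"
    by (simp flip: dot_lmul_matrix)
  then show ?thesis
    using assms by (simp add: inner_commute)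
qed

lemma quadratic_form_cauchy_schwarz:
  fixes A :: "real^'n^'n"
  assumes sym: "transpose A = A" and psd: "\<And>y. 0 \<le> y \<bullet> (A *v y)"
  shows "(a \<bullet> (A *v b))\<^sup>2 \<le> (a \<bullet> (A *v a)) * (b \<bullet> (A *v b))"
proof -
  define r where "r = a \<bullet> (A *v b)"
  define s where "s = a \<bullet> (A *v a)"
  define p where "p = b \<bullet> (A *v b)"
  have nonneg: "0 \<le> s - 2 * t * r + t\<^sup>2 * p" for t
  proof -
    have "(a - t *\<^sub>R b) \<bullet> (A *v (a - t *\<^sub>R b)) = s - t * (a \<bullet> (A *v b)) - t * (b \<bullet> (A *v a)) + t\<^sup>2 * p"
      unfolding s_def p_def
      by (simp add: matrix_vector_mult_diff_distrib matrix_vector_mult_scaleR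
          inner_diff_left inner_diff_right power2_eq_square algebra_simps)
    also have "\<dots> = s - 2 * t * r + t\<^sup>2 * p"
      unfolding r_def using symmetric_matrix_inner_commute[OF sym, of b a] by simp
    finally show ?thesis
      using psd by metis
  qed
  have "r\<^sup>2 \<le> s * p"
  proof (cases "p = 0")
    case True
    \<comment> \<open>the affine function \<open>t \<mapsto> s - 2 t r\<close> is nonnegative everywhere only if \<open>r = 0\<close>\<close>
    have "r = 0"
    proof (rule ccontr)
      assume "r \<noteq> 0"
      then show False
        using nonneg[of "(s + 1) / (2 * r)"] True by (simp add: field_simps)
    qed
    then show ?thesis
      using True by simp
  next
    case False
    then have "0 < p"
      using psd[of b] unfolding p_def by linarith
    then show ?thesis
      using nonneg[of "r / p"] by (simp add: field_simps power2_eq_square)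
  qed
  then show ?thesis
    unfolding r_def s_def p_def .
qed

lemma inner_self_le_norm1_op_matrix_inv:
  fixes V :: "real^'n^'n"
  assumes inv: "invertible V" and sym: "transpose V = V" and psd: "\<And>y. 0 \<le> y \<bullet> (V *v y)"
  shows "x \<bullet> x \<le> norm1_op (matrix_inv V) * (x \<bullet> (V *v x))"
proof (cases "x = 0")
  case False
  define W where "W = matrix_inv V"
  have VW: "V *v (W *v x) = x"
    using matrix_inv_right[OF inv] by (simp add: W_def matrix_vector_mul_assoc)
  have "(x \<bullet> x)\<^sup>2 = (x \<bullet> (V *v (W *v x)))\<^sup>2"
    by (simp add: VW)
  also have "\<dots> \<le> (x \<bullet> (V *v x)) * ((W *v x) \<bullet> (V *v (W *v x)))"
    by (rule quadratic_form_cauchy_schwarz[OF sym psd])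
  also have "(W *v x) \<bullet> (V *v (W *v x)) = x \<bullet> (W *v x)"
    by (simp add: VW inner_commute)
  also have "(x \<bullet> (V *v x)) * (x \<bullet> (W *v x)) \<le> (x \<bullet> (V *v x)) * (norm1_op W * (x \<bullet> x))"
    using quadratic_form_le_norm1_op[OF symmetric_matrix_inv[OF inv sym]] psd
    unfolding W_def by (rule mult_left_mono)
  finally have "(x \<bullet> x) * (x \<bullet> x) \<le> (norm1_op W * (x \<bullet> (V *v x))) * (x \<bullet> x)"
    by (simp add: power2_eq_square ac_simps)
  then show ?thesis
    using False by (simp add: W_def)
qed simp

lemma integral_vector_norm_le_inner_self:
  assumes "integral_vector x"
  shows "norm x \<le> x \<bullet> x"
proof (cases "x = 0")
  case False
  then obtain i where "x $ i \<noteq> 0"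
    by (metis vec_eq_iff zero_index)
  moreover have "x $ i \<in> \<int>"
    using assms unfolding integral_vector_def by blast
  ultimately have "1 \<le> norm x"
    using Ints_nonzero_abs_ge1 component_le_norm_cart order_trans by blast
  then have "norm x \<le> (norm x)\<^sup>2"
    by (simp add: power2_eq_square mult_le_cancel_left1)
  then show ?thesis
    by (simp add: power2_norm_eq_inner)
qed simp

theorem lemma6p6:
  fixes V :: "real^'m^'m" and x :: "real^'m"
  assumes "integral_matrix V"
    and "\<bar>det V\<bar> = 1"
    and "transpose V = V"
    and "\<forall>y. y \<noteq> 0 \<longrightarrow> y \<bullet> (V *v y) > 0"
    and "integral_vector x"
  shows "norm x \<le> norm1_op (matrix_inv V) * (x \<bullet> (V *v x))"
proof -
  have "invertible V"
    using assms(2) by (auto simp: invertible_det_nz)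
  moreover have "0 \<le> y \<bullet> (V *v y)" for y
    using assms(4) by (cases "y = 0") (auto intro: less_imp_le)
  ultimately have "x \<bullet> x \<le> norm1_op (matrix_inv V) * (x \<bullet> (V *v x))"
    using inner_self_le_norm1_op_matrix_inv assms(3) by blast
  then show ?thesis
    using integral_vector_norm_le_inner_self[OF assms(5)] by linarith
qed

end
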